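(* Let $P$ be a finite set of points in the plane and let $G(P,S)$ be an increasing-chord geometric graph with vertex set $P$ and edge set $S$. Then every edge of the Gabriel graph of $P$ belongs to $S$.
   Context: The Gabriel graph of a point set $P$ is the geometric graph with vertex set $P$ having an edge $\overline{pq}$ between $p,q\in P$ if and only if the closed disk with diameter $\overline{pq}$ contains no point of $P\setminus\{p,q\}$ in its interior or on its boundary. A geometric path $(v_1,\dots,v_k)$ is self-approaching from $v_1$ to $v_k$ if for every three distinct points $a,b,c$ appearing in this order along the path (possibly interior to edges) $|\overline{bc}|<|\overline{ac}|$, where $|\cdot|$ is Euclidean length. A geometric graph (point set plus straight-line edges) is increasing-chord if for every pair of vertices $u,v$ it contains a path between them that is self-approaching both from $u$ to $v$ and from $v$ to $u$. *)

theory Defs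
  imports "HOL-Analysis.Analysis"
begin

type_synonym point = "real^2"

definition gabriel_edge :: "point set \<Rightarrow> point \<Rightarrow> point \<Rightarrow> bool" where
  "gabriel_edge P p q \<longleftrightarrow> p \<in> P \<and> q \<in> P \<and> p \<noteq> q \<and>
     (\<forall>r \<in> P - {p, q}. r \<notin> cball (midpoint p q) (dist p q / 2))"

fun polypath :: "point list \<Rightarrow> real \<Rightarrow> point" where
  "polypath [] = linepath 0 0"
| "polypath [v] = linepath v v"
| "polypath (v # w # rest) = linepath v w +++ polypath (w # rest)"

definition self_approaching :: "point list \<Rightarrow> bool" where
  "self_approaching vs \<longleftrightarrow>
     (\<forall>s1 s2 s3. 0 \<le> s1 \<and> s1 < s2 \<and> s2 < s3 \<and> s3 \<le> 1 \<longrightarrow>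
        (let a = polypath vs s1; b = polypath vs s2; c = polypath vs s3 in
          a \<noteq> b \<and> b \<noteq> c \<and> a \<noteq> c \<longrightarrow> dist b c < dist a c))"

definition graph_path :: "point set set \<Rightarrow> point list \<Rightarrow> point \<Rightarrow> point \<Rightarrow> bool" where
  "graph_path S vs u v \<longleftrightarrow> vs \<noteq> [] \<and> hd vs = u \<and> last vs = v \<and>
     (\<forall>i. Suc i < length vs \<longrightarrow> {vs ! i, vs ! Suc i} \<in> S)"

definition geometric_graph :: "point set \<Rightarrow> point set set \<Rightarrow> bool" where
  "geometric_graph P S \<longleftrightarrow> (\<forall>e \<in> S. e \<subseteq> P \<and> card e = 2)"

definition increasing_chord :: "point set \<Rightarrow> point set set \<Rightarrow> bool" where
  "increasing_chord P S \<longleftrightarrow>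
     (\<forall>u \<in> P. \<forall>v \<in> P. \<exists>vs. graph_path S vs u v \<and>
        self_approaching vs \<and> self_approaching (rev vs))"

end

theory Submission
  imports Defs
begin

text \<open>The first edge of a self-approaching path from p to q leads to a vertex r with
  a right or obtuse angle p r q: otherwise, walking from r back towards p decreases the
  distance to q, so a point just before r on the first edge is farther from q than r
  is, contradicting self-approach. By Thales, r then lies in the closed disk with
  diameter pq; for a Gabriel edge pq the only vertex allowed there is q itself, so the
  first edge of every increasing-chord path from p to q is pq.\<close>

lemma polypath_1: "vs \<noteq> [] \<Longrightarrow> polypath vs 1 = last vs"
  by (induction vs rule: polypath.induct) (auto simp: joinpaths_def linepath_def)

lemma polypath_Cons_Cons_first_half:
  "t \<le> 1/2 \<Longrightarrow> polypath (v # w # rest) t = linepath v w (2 * t)"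
  by (simp add: joinpaths_def)

lemma polypath_Cons_Cons_half: "polypath (v # w # rest) (1/2) = w"
  by (simp add: joinpaths_def linepath_def)

lemma power2_norm_add_le_power2_norm_diff_iff:
  fixes x y :: "'a::real_inner"
  shows "(norm (x + y))\<^sup>2 \<le> (norm (y - x))\<^sup>2 \<longleftrightarrow> x \<bullet> y \<le> 0"
  by (simp add: power2_norm_eq_inner inner_add_left inner_add_right inner_diff_left
      inner_diff_right inner_commute)

lemma power2_norm_diff_scaleR:
  fixes x y :: "'a::real_inner"
  shows "(norm (x - u *\<^sub>R y))\<^sup>2 = x \<bullet> x - 2 * u * (x \<bullet> y) + u\<^sup>2 * (y \<bullet> y)"
  by (simp only: power2_norm_eq_inner)
    (simp add: inner_commute power2_eq_square algebra_simps)

lemma mem_cball_midpoint_iff_inner_le_0: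
  fixes p q r :: "'a::real_inner"
  shows "r \<in> cball (midpoint p q) (dist p q / 2) \<longleftrightarrow> (r - p) \<bullet> (r - q) \<le> 0"
proof -
  have mid: "r - midpoint p q = (1/2) *\<^sub>R ((r - p) + (r - q))"
    by (simp add: midpoint_def scaleR_add_right scaleR_diff_right scaleR_2[symmetric] del: scaleR_2)
  have "r \<in> cball (midpoint p q) (dist p q / 2) \<longleftrightarrow>
      norm ((r - p) + (r - q)) \<le> norm ((r - q) - (r - p))"
    by (simp add: dist_norm mid norm_minus_commute)
  also have "\<dots> \<longleftrightarrow> (norm ((r - p) + (r - q)))\<^sup>2 \<le> (norm ((r - q) - (r - p)))\<^sup>2"
    by (simp add: power_mono_iff)
  also have "\<dots> \<longleftrightarrow> (r - p) \<bullet> (r - q) \<le> 0"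
    by (rule power2_norm_add_le_power2_norm_diff_iff)
  finally show ?thesis .
qed

lemma acute_angle_closer_point_on_segment:
  fixes p q r :: "'a::real_inner"
  assumes acute: "(r - p) \<bullet> (r - q) > 0"
  obtains u where "0 < u" "u \<le> 1/2" "r + u *\<^sub>R (p - r) \<noteq> r"
    "r + u *\<^sub>R (p - r) \<noteq> q" "dist (r + u *\<^sub>R (p - r)) q < dist r q"
proof -
  define D where "D = (r - p) \<bullet> (r - q)"
  define L where "L = (r - p) \<bullet> (r - p)"
  define F where "F = (r - q) \<bullet> (r - q)"
  have "D > 0" using acute by (simp add: D_def)
  have "r \<noteq> p" "r \<noteq> q" using acute by auto
  then have "L > 0" "F > 0" by (simp_all add: L_def F_def)
  define u where "u = min (1/2) (min (D / L) (F / (4 * D)))"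
  have "u > 0" using \<open>D > 0\<close> \<open>L > 0\<close> \<open>F > 0\<close> by (simp add: u_def)
  have "u \<le> 1/2" unfolding u_def by (rule min.cobounded1)
  have "u \<le> D / L" "u \<le> F / (4 * D)" by (simp_all add: u_def)
  then have "u * L \<le> D" "u * D \<le> F / 4"
    using \<open>L > 0\<close> \<open>D > 0\<close> by (simp_all add: pos_le_divide_eq)
  define a where "a = r + u *\<^sub>R (p - r)"
  have aq: "a - q = (r - q) - u *\<^sub>R (r - p)" by (simp add: a_def algebra_simps)
  have expand: "(norm (a - q))\<^sup>2 = F - 2 * u * D + u\<^sup>2 * L"
    by (simp only: aq power2_norm_diff_scaleR) (simp add: F_def D_def L_def inner_commute)
  \<comment> \<open>\<open>u L \<le> D\<close> makes the quadratic term at most half the linear one, and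
    \<open>u D \<le> F/4\<close> keeps the total positive.\<close>
  have "u\<^sup>2 * L \<le> u * D"
    using \<open>u * L \<le> D\<close> \<open>u > 0\<close> by (simp add: power2_eq_square mult.assoc)
  moreover have "u * D > 0" using \<open>u > 0\<close> \<open>D > 0\<close> by simp
  moreover have "u\<^sup>2 * L \<ge> 0" using \<open>L > 0\<close> by simp
  ultimately have "(norm (a - q))\<^sup>2 < (norm (r - q))\<^sup>2" "(norm (a - q))\<^sup>2 > 0"
    using expand \<open>u * D \<le> F / 4\<close> \<open>F > 0\<close> by (auto simp: F_def power2_norm_eq_inner)
  then have "dist a q < dist r q" "a \<noteq> q"
    by (auto simp: dist_norm intro: power2_less_imp_less)
  moreover have "a \<noteq> r" using \<open>u > 0\<close> \<open>r \<noteq> p\<close> by (simp add: a_def)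
  ultimately show ?thesis using that \<open>u > 0\<close> \<open>u \<le> 1/2\<close> by (simp add: a_def)
qed

lemma self_approaching_second_vertex_in_cball:
  assumes "self_approaching (v # w # rest)"
  defines "z \<equiv> last (w # rest)"
  shows "w \<in> cball (midpoint v z) (dist v z / 2)"
proof (rule ccontr)
  let ?\<gamma> = "polypath (v # w # rest)"
  assume "w \<notin> cball (midpoint v z) (dist v z / 2)"
  then have "(w - v) \<bullet> (w - z) > 0" by (metis mem_cball_midpoint_iff_inner_le_0 not_le)
  then obtain u where u: "0 < u" "u \<le> 1/2" and a: "w + u *\<^sub>R (v - w) \<noteq> w"
      "w + u *\<^sub>R (v - w) \<noteq> z" "dist (w + u *\<^sub>R (v - w)) z < dist w z"
    by (rule acute_angle_closer_point_on_segment)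
  have "w \<noteq> z" using \<open>(w - v) \<bullet> (w - z) > 0\<close> by auto
  have approach: "dist (?\<gamma> s2) (?\<gamma> s3) < dist (?\<gamma> s1) (?\<gamma> s3)"
    if "0 \<le> s1" "s1 < s2" "s2 < s3" "s3 \<le> 1" "?\<gamma> s1 \<noteq> ?\<gamma> s2"
      "?\<gamma> s2 \<noteq> ?\<gamma> s3" "?\<gamma> s1 \<noteq> ?\<gamma> s3" for s1 s2 s3
    using assms(1) that unfolding self_approaching_def Let_def by blast
  have "?\<gamma> ((1 - u) / 2) = linepath v w (1 - u)"
    using polypath_Cons_Cons_first_half[of "(1 - u) / 2" v w rest] u
    by (simp add: diff_divide_distrib)
  also have "\<dots> = w + u *\<^sub>R (v - w)" by (simp add: linepath_def algebra_simps)
  finally have "?\<gamma> ((1 - u) / 2) = w + u *\<^sub>R (v - w)" .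
  moreover have "?\<gamma> (1/2) = w" by (rule polypath_Cons_Cons_half)
  moreover have "?\<gamma> 1 = z" unfolding z_def by (metis polypath_1 last_ConsR list.distinct(1))
  ultimately have "dist w z < dist (w + u *\<^sub>R (v - w)) z"
    using approach[of "(1 - u) / 2" "1/2" 1] u a \<open>w \<noteq> z\<close> by auto
  with a show False by simp
qed

theorem lemma2:
  fixes P :: "(real^2) set" and S :: "(real^2) set set"
  assumes "finite P"
    and "geometric_graph P S"
    and "increasing_chord P S"
    and "gabriel_edge P p q"
  shows "{p, q} \<in> S"
proof -
  have "p \<in> P" "q \<in> P" "p \<noteq> q"
    and empty_disk: "\<forall>r \<in> P - {p, q}. r \<notin> cball (midpoint p q) (dist p q / 2)"
    using assms(4) unfolding gabriel_edge_def by auto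
  then obtain vs where path: "graph_path S vs p q" and "self_approaching vs"
    using assms(3) unfolding increasing_chord_def by blast
  then obtain r rest where vs: "vs = p # r # rest"
    using \<open>p \<noteq> q\<close> unfolding graph_path_def by (metis hd_Cons_tl last_ConsL list.sel(1))
  have "{p, r} \<in> S" using path vs unfolding graph_path_def by force
  then have "r \<in> P" "r \<noteq> p"
    using assms(2) unfolding geometric_graph_def by (auto simp: card_insert_if)
  have "r \<in> cball (midpoint p q) (dist p q / 2)"
    using self_approaching_second_vertex_in_cball \<open>self_approaching vs\<close> path
    unfolding vs graph_path_def by (metis last_ConsR list.distinct(1))
  then have "r = q" using empty_disk \<open>r \<in> P\<close> \<open>r \<noteq> p\<close> by blast
  with \<open>{p, r} \<in> S\<close> show ?thesis by simp
qed

end
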